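(* Let $F$ be a nonarchimedean local field with ring of integers $\mathcal{O}$, uniformizer $\varpi$, residue field of order $q$. Let $\nu\in\mathbb{C}$ and let $V_\nu$ be the space of locally constant $f:\mathrm{SL}_2(F)\to\mathbb{C}$ with $f(a(t)nk)=|t|^{\nu+1}f(k)$ for $t\in F^\times$, $n\in N$, $k\in\mathrm{SL}_2(\mathcal{O})$, where $a(t)=\mathrm{diag}(t,t^{-1})$ and $N$ is the group of upper triangular unipotent matrices; $\mathrm{SL}_2(F)$ acts by right translation ($\pi_\nu$). Let $f_0\in V_\nu$ be the vector with $f_0(a(t)nk)=|t|^{\nu+1}$. Let $\tilde\eta$ be a character of $F$ trivial on $\mathcal{O}$ and nontrivial on $\varpi^{-1}\mathcal{O}$, $\eta\begin{pmatrix}1&x\\0&1\end{pmatrix}=\tilde\eta(x)$, $w=\begin{pmatrix}0&1\\-1&0\end{pmatrix}$, and $\psi(f)=\int_N\eta(n^{-1})f(wn)\,dn$, with $W(g)=\psi(\pi_\nu(g)f_0)$. Put $I(s)=\int_{F^\times}W(a(t))|t|^{s-1}d^\times t$. Then for $\mathrm{Re}(s)$ sufficiently large $$I(s)=\frac{L(\pi,\mathrm{Ad},s)}{L(\pi,\mathrm{triv},s)}F_\nu(s),$$ where $L(\pi,\mathrm{triv},s)=\frac{1}{1-q^{-s}}$, $L(\pi,\mathrm{Ad},s)=\frac{1}{(1-q^{-(s+\nu)})(1-q^{-s})(1-q^{-(s-\nu)})}$, and $F_\nu(s)=(1-q^{-\nu-1})(1+q^{-s})$ is entire; that is, $I(s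)=\frac{(1-q^{-\nu-1})(1+q^{-s})}{(1-q^{-(s+\nu)})(1-q^{-(s-\nu)})}$.
   Context: Haar measures: $dx$ on $F$ (and $dn$ on $N\cong F$) normalized so that $\mathcal{O}$ has volume $1$; $d^\times t$ on $F^\times$ normalized so that $\mathcal{O}^\times$ has volume $1$. The integral defining $\psi$ is understood as $\lim_{k\to\infty}\int_{\varpi^{-k}\mathcal{O}}$ over $x$ for $n=\begin{pmatrix}1&x\\0&1\end{pmatrix}$ (it is absolutely convergent for $\mathrm{Re}(\nu)>0$). *)

theory Defs
  imports "HOL-Analysis.Analysis"
begin

definition int_ring :: "('a::field \<Rightarrow> real) \<Rightarrow> 'a set" where
  "int_ring av = {x. av x \<le> 1}"

definition unit_group :: "('a::field \<Rightarrow> real) \<Rightarrow> 'a set" where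
  "unit_group av = {x. av x = 1}"

definition residue_field :: "('a::field \<Rightarrow> real) \<Rightarrow> 'a set set" where
  "residue_field av = int_ring av //
     {(x, y). x \<in> int_ring av \<and> y \<in> int_ring av \<and> av (x - y) < 1}"

definition av_cauchy :: "('a::field \<Rightarrow> real) \<Rightarrow> (nat \<Rightarrow> 'a) \<Rightarrow> bool" where
  "av_cauchy av X \<longleftrightarrow> (\<forall>e>0. \<exists>N. \<forall>m\<ge>N. \<forall>n\<ge>N. av (X m - X n) < e)"

definition av_conv :: "('a::field \<Rightarrow> real) \<Rightarrow> (nat \<Rightarrow> 'a) \<Rightarrow> 'a \<Rightarrow> bool" where
  "av_conv av X L \<longleftrightarrow> (\<forall>e>0. \<exists>N. \<forall>n\<ge>N. av (X n - L) < e)"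

definition nonarch_local_field :: "('a::field \<Rightarrow> real) \<Rightarrow> 'a \<Rightarrow> nat \<Rightarrow> bool" where
  "nonarch_local_field av \<pi> q \<longleftrightarrow>
     (\<forall>x. 0 \<le> av x) \<and> (\<forall>x. av x = 0 \<longleftrightarrow> x = 0) \<and>
     (\<forall>x y. av (x * y) = av x * av y) \<and>
     (\<forall>x y. av (x + y) \<le> max (av x) (av y)) \<and>
     (\<forall>x. x \<noteq> 0 \<longrightarrow> (\<exists>k::int. av x = real q powr real_of_int k)) \<and>
     av \<pi> = 1 / real q \<and>
     finite (residue_field av) \<and> card (residue_field av) = q \<and>
     (\<forall>X. av_cauchy av X \<longrightarrow> (\<exists>L. av_conv av X L))"

definition av_balls :: "('a::field \<Rightarrow> real) \<Rightarrow> 'a set set" where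
  "av_balls av = {{y. av (y - x) \<le> r} | x r. True}"

definition add_haar :: "('a::field \<Rightarrow> real) \<Rightarrow> 'a measure \<Rightarrow> bool" where
  "add_haar av mu \<longleftrightarrow>
     space mu = UNIV \<and> sets mu = sigma_sets UNIV (av_balls av) \<and>
     (\<forall>A\<in>sets mu. \<forall>x. emeasure mu ((\<lambda>y. x + y) ` A) = emeasure mu A) \<and>
     emeasure mu (int_ring av) = 1"

definition mult_haar :: "('a::field \<Rightarrow> real) \<Rightarrow> 'a measure \<Rightarrow> 'a measure \<Rightarrow> bool" where
  "mult_haar av mu mux \<longleftrightarrow>
     space mux = {x. x \<noteq> 0} \<and> sets mux = sets (restrict_space mu {x. x \<noteq> 0}) \<and>
     (\<forall>A\<in>sets mux. \<forall>x. x \<noteq> 0 \<longrightarrow> emeasure mux ((\<lambda>y. x * y) ` A) = emeasure mux A) \<and>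
     emeasure mux (unit_group av) = 1"

definition mat2 :: "'a::zero \<Rightarrow> 'a \<Rightarrow> 'a \<Rightarrow> 'a \<Rightarrow> 'a^2^2" where
  "mat2 a b c d = vector [vector [a, b], vector [c, d]]"

definition amat :: "'a::field \<Rightarrow> 'a^2^2" where "amat t = mat2 t 0 0 (inverse t)"
definition nmat :: "'a::field \<Rightarrow> 'a^2^2" where "nmat x = mat2 1 x 0 1"
definition wmat :: "'a::field^2^2" where "wmat = mat2 0 1 (-1) 0"

definition SL2 :: "('a::field^2^2) set" where "SL2 = {g. det g = 1}"

definition SL2_int :: "('a::field \<Rightarrow> real) \<Rightarrow> ('a^2^2) set" where
  "SL2_int av = {k. det k = 1 \<and> (\<forall>i j. k $ i $ j \<in> int_ring av)}"

text \<open>\<psi>(f) = lim_k \<integral>_{\<pi>^{-k} O} \<eta>(n(x)^{-1}) f(w n(x)) dx, and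
  W(g) = \<psi>(\<pi>_\<nu>(g) f0), where (\<pi>_\<nu>(g) f0)(h) = f0(h g).\<close>
definition whittaker_psi ::
  "('a::field \<Rightarrow> real) \<Rightarrow> 'a \<Rightarrow> 'a measure \<Rightarrow> ('a \<Rightarrow> complex) \<Rightarrow> ('a^2^2 \<Rightarrow> complex) \<Rightarrow> complex" where
  "whittaker_psi av \<pi> mu eta f =
     lim (\<lambda>k::nat. LINT x:((\<lambda>y. inverse \<pi> ^ k * y) ` int_ring av)|mu. eta (- x) * f (wmat ** nmat x))"

definition whittaker_W ::
  "('a::field \<Rightarrow> real) \<Rightarrow> 'a \<Rightarrow> 'a measure \<Rightarrow> ('a \<Rightarrow> complex) \<Rightarrow> ('a^2^2 \<Rightarrow> complex) \<Rightarrow> 'a^2^2 \<Rightarrow> complex" where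
  "whittaker_W av \<pi> mu eta f0 g = whittaker_psi av \<pi> mu eta (\<lambda>h. f0 (h ** g))"

definition zeta_I ::
  "('a::field \<Rightarrow> real) \<Rightarrow> 'a \<Rightarrow> 'a measure \<Rightarrow> 'a measure \<Rightarrow> ('a \<Rightarrow> complex) \<Rightarrow> ('a^2^2 \<Rightarrow> complex) \<Rightarrow> complex \<Rightarrow> complex" where
  "zeta_I av \<pi> mu mux eta f0 s =
     (LINT t|mux. whittaker_W av \<pi> mu eta f0 (amat t) * complex_of_real (av t) powr (s - 1))"

definition L_triv :: "nat \<Rightarrow> complex \<Rightarrow> complex" where
  "L_triv q s = 1 / (1 - of_nat q powr (- s))"

definition L_Ad :: "nat \<Rightarrow> complex \<Rightarrow> complex \<Rightarrow> complex" where
  "L_Ad q \<nu> s = 1 / ((1 - of_nat q powr (-(s + \<nu>))) * (1 - of_nat q powr (- s))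
                     * (1 - of_nat q powr (-(s - \<nu>))))"

definition F_nu :: "nat \<Rightarrow> complex \<Rightarrow> complex \<Rightarrow> complex" where
  "F_nu q \<nu> s = (1 - of_nat q powr (- \<nu> - 1)) * (1 + of_nat q powr (- s))"

end

(*
  By the Iwasawa decomposition, f0 g = max (|c|, |d|) ^ -(nu + 1) for g with bottom row (c, d),
  so the integrand f0 (w n(x) a(t)) of W(a(t)) depends on x only through |x|. The character
  integrates to q^j over the ball |x| <= q^j when j <= 0 and to 0 when j >= 1, so summation by
  parts over the shells |x| = q^j shows that W(a(t)) vanishes for |t| > 1 and is a finite
  geometric expression for |t| = q^-n. Every shell |t| = q^-n has multiplicative measure 1, so
  I(s) is a power series in q^-s; its coefficients obey a first-order recursion, which yields
  the rational function in closed form once Re s is large enough for absolute convergence.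
*)

theory Submission
  imports Defs
begin

section \<open>The absolute value and its balls\<close>

lemma equiv_class_representatives:
  assumes "equiv A r"
  obtains R where "R \<subseteq> A" "bij_betw (\<lambda>a. r `` {a}) R (A // r)"
proof -
  have rep: "(SOME a. a \<in> X) \<in> X" "r `` {SOME a. a \<in> X} = X" if "X \<in> A // r" for X
  proof -
    obtain x where x: "x \<in> A" "X = r `` {x}" using \<open>X \<in> A // r\<close>
      by (rule quotientE)
    hence "x \<in> X" using equiv_class_self[OF assms] by simp
    thus some: "(SOME a. a \<in> X) \<in> X" by (rule someI)
    hence "r `` {x} = r `` {SOME a. a \<in> X}"
      using x(2) by (intro equiv_class_eq[OF assms]) blast
    thus "r `` {SOME a. a \<in> X} = X" using x(2) by (rule trans[OF sym sym])
  qed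
  have sub: "X \<subseteq> A" if "X \<in> A // r" for X
    using that assms by (auto elim!: quotientE dest: equiv_type)
  show thesis
  proof
    show "(\<lambda>X. SOME a. a \<in> X) ` (A // r) \<subseteq> A" using rep sub by blast
    show "bij_betw (\<lambda>a. r `` {a}) ((\<lambda>X. SOME a. a \<in> X) ` (A // r)) (A // r)"
      by (rule bij_betw_byWitness[where f' = "\<lambda>X. SOME a. a \<in> X"])
        (auto simp: rep simp del: Image_singleton_iff)
  qed
qed

locale local_field =
  fixes av :: "'a::field \<Rightarrow> real" and \<pi> :: 'a and q :: nat
  assumes local_field: "nonarch_local_field av \<pi> q"
begin

abbreviation Q :: real where "Q \<equiv> real q"

lemma av_nonneg: "0 \<le> av x"
  and av_eq_0_iff [simp]: "av x = 0 \<longleftrightarrow> x = 0"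
  and av_mult: "av (x * y) = av x * av y"
  and av_add_le_max: "av (x + y) \<le> max (av x) (av y)"
  and av_nonzero_values: "x \<noteq> 0 \<Longrightarrow> \<exists>k::int. av x = Q powr k"
  and av_uniformizer: "av \<pi> = 1 / Q"
  and finite_residue_field: "finite (residue_field av)"
  and card_residue_field: "card (residue_field av) = q"
  using local_field by (auto simp: nonarch_local_field_def)

lemma av_0 [simp]: "av 0 = 0"
  by simp

lemma av_pos: "x \<noteq> 0 \<Longrightarrow> 0 < av x"
  using av_nonneg[of x] av_eq_0_iff[of x] by linarith

lemma av_1 [simp]: "av 1 = 1"
  using av_mult[of 1 1] by simp

lemma av_minus [simp]: "av (- x) = av x"
proof -
  have "(av (-1) - 1) * (av (-1) + 1) = 0"
    using av_mult[of "-1" "-1"] by (simp add: algebra_simps)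
  moreover have "av (-1) + 1 \<noteq> 0" using av_nonneg[of "-1"] by linarith
  ultimately have "av (-1) = 1" by simp
  thus ?thesis using av_mult[of "-1" x] by simp
qed

lemma av_minus_commute: "av (x - y) = av (y - x)"
  by (metis av_minus minus_diff_eq)

lemma av_inverse: "av (inverse x) = inverse (av x)"
  by (cases "x = 0") (auto simp: field_simps simp flip: av_mult)

lemma av_divide: "av (x / y) = av x / av y"
  by (simp add: divide_inverse av_mult av_inverse)

lemma av_power: "av (x ^ n) = av x ^ n"
  by (induct n) (auto simp: av_mult)

definition residue_rel :: "('a \<times> 'a) set" where
  "residue_rel = {(x, y). x \<in> int_ring av \<and> y \<in> int_ring av \<and> av (x - y) < 1}"

lemma residue_field_eq: "residue_field av = int_ring av // residue_rel"
  by (simp add: residue_field_def residue_rel_def)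

lemma equiv_residue_rel: "equiv (int_ring av) residue_rel"
proof (rule equivI)
  show "trans residue_rel"
  proof (rule transI)
    fix x y z assume "(x, y) \<in> residue_rel" "(y, z) \<in> residue_rel"
    moreover have "av (x - z) \<le> max (av (x - y)) (av (y - z))"
      using av_add_le_max[of "x - y" "y - z"] by simp
    ultimately show "(x, z) \<in> residue_rel" by (auto simp: residue_rel_def)
  qed
qed (auto simp: refl_on_def sym_def residue_rel_def av_minus_commute)

text \<open>For q = 1 every nonzero element would be a unit, and the residue field would have at
  least the two classes of 0 and 1.\<close>
lemma q_ge_2: "q \<ge> 2"
proof (rule ccontr)
  assume "\<not> q \<ge> 2"
  hence "q = 0 \<or> q = 1" by auto
  thus False
  proof
    assume "q = 0"
    thus False using av_nonzero_values[of 1] by auto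
  next
    assume q1: "q = 1"
    hence unit: "x \<noteq> 0 \<Longrightarrow> av x = 1" for x using av_nonzero_values[of x]
      by auto
    have "av x \<le> 1" for x using unit[of x] by (cases "x = 0") auto
    hence O: "int_ring av = UNIV" by (auto simp: int_ring_def)
    have "av (x - y) < 1 \<Longrightarrow> y = x" for x y using unit[of "x - y"] by force
    hence "residue_rel `` {x} = {x}" for x by (auto simp: residue_rel_def O)
    hence "{0} \<in> residue_field av" "{1} \<in> residue_field av"
      unfolding residue_field_eq using O by (metis UNIV_I quotientI)+
    hence "card {{0::'a}, {1}} \<le> card (residue_field av)"
      using finite_residue_field by (intro card_mono) auto
    thus False using card_residue_field q1 by simp
  qed
qed

lemma Q_gt_1: "Q > 1" and Q_pos: "Q > 0"
  using q_ge_2 by simp_all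

lemma Q_powr_le_iff: "Q powr a \<le> Q powr b \<longleftrightarrow> a \<le> b"
  and Q_powr_less_iff: "Q powr a < Q powr b \<longleftrightarrow> a < b"
  and Q_powr_eq_iff: "Q powr a = Q powr b \<longleftrightarrow> a = b"
  using Q_gt_1 by (auto simp: powr_inj)

lemma av_less_1_iff: "av x < 1 \<longleftrightarrow> av x \<le> 1 / Q"
proof
  assume "av x < 1"
  show "av x \<le> 1 / Q"
  proof (cases "x = 0")
    case False
    then obtain k :: int where k: "av x = Q powr k" using av_nonzero_values by blast
    with \<open>av x < 1\<close> have "k \<le> - 1" using Q_powr_less_iff[of k 0] Q_pos by simp
    thus ?thesis using k Q_powr_le_iff[of k "- 1"] Q_pos by (simp add: powr_minus_divide)
  qed (use Q_pos in simp)
next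
  assume "av x \<le> 1 / Q"
  moreover have "1 / Q < 1" using Q_gt_1 by simp
  ultimately show "av x < 1" by linarith
qed

lemma uniformizer_nonzero: "\<pi> \<noteq> 0"
  using av_uniformizer Q_pos by auto

lemma ex_av_eq: "\<exists>c. c \<noteq> 0 \<and> av c = Q powr real_of_int j"
proof (cases "j \<ge> 0")
  case True
  have "av (inverse \<pi> ^ nat j) = Q powr j"
    using True Q_pos by (simp add: av_power av_inverse av_uniformizer powr_realpow[symmetric])
  thus ?thesis using uniformizer_nonzero by (intro exI[of _ "inverse \<pi> ^ nat j"]) auto
next
  case False
  have "av (\<pi> ^ nat (-j)) = (1/Q) ^ nat (-j)" by (simp add: av_power av_uniformizer)
  also have "\<dots> = Q powr (- real (nat (-j)))"
    using Q_pos by (simp add: powr_minus powr_realpow power_one_over inverse_eq_divide)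
  also have "- real (nat (-j)) = real_of_int j" using False by simp
  finally show ?thesis using uniformizer_nonzero by (intro exI[of _ "\<pi> ^ nat (-j)"]) auto
qed

lemma image_mult_int_ring:
  assumes "c \<noteq> 0" shows "(\<lambda>y. c * y) ` int_ring av = {x. av x \<le> av c}"
proof (intro equalityI subsetI)
  fix x assume "x \<in> {x. av x \<le> av c}" with assms show "x \<in> (\<lambda>y. c * y) ` int_ring av"
    by (intro image_eqI[of _ _ "x / c"]) (auto simp: int_ring_def av_divide av_pos)
qed (use av_nonneg[of c] in \<open>auto simp: int_ring_def av_mult intro: mult_left_le\<close>)

lemma of_real_Q_powr: "complex_of_real (Q powr r) = exp (of_real (r * ln Q))"
  using Q_pos by (simp add: powr_def exp_of_real del: of_real_mult)

lemma of_real_Q_powr_powr: "complex_of_real (Q powr r) powr w = exp (w * of_real (r * ln Q))"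
proof -
  have "Ln (complex_of_real (Q powr r)) = complex_of_real (r * ln Q)"
    using Q_pos by (simp add: Ln_of_real ln_powr)
  thus ?thesis using Q_pos by (simp add: powr_def)
qed

lemma of_nat_q_powr: "(of_nat q :: complex) powr w = exp (w * of_real (ln Q))"
  using of_real_Q_powr_powr[of 1 w] Q_pos by simp

lemma norm_of_nat_q_powr: "norm ((of_nat q :: complex) powr w) = Q powr Re w"
  using Q_pos by (simp add: of_nat_q_powr powr_def)

lemma Q_powr_less_1_iff: "Q powr r < 1 \<longleftrightarrow> r < 0"
  using Q_powr_less_iff[of r 0] Q_pos by simp

definition pball :: "int \<Rightarrow> 'a set" where
  "pball j = {x. av x \<le> Q powr real_of_int j}"

lemma pball_0: "pball 0 = int_ring av"
  using Q_pos by (simp add: pball_def int_ring_def)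

lemma pball_mono: "i \<le> j \<Longrightarrow> pball i \<subseteq> pball j"
  unfolding pball_def using Q_powr_le_iff by (auto intro: order_trans)

lemma ex_pball_nat: "\<exists>k::nat. x \<in> pball (int k)"
proof (cases "x = 0")
  case False
  then obtain m :: int where "av x = Q powr m" using av_nonzero_values by blast
  hence "x \<in> pball (int (nat m))" by (simp add: pball_def Q_powr_le_iff)
  thus ?thesis by blast
qed (auto simp: pball_def)

lemma av_eq_if_in_pball_shell:
  assumes "x \<in> pball (j + 1)" "x \<notin> pball j" shows "av x = Q powr (j + 1)"
proof -
  have "x \<noteq> 0" using assms(2) by (auto simp: pball_def)
  then obtain m :: int where m: "av x = Q powr m" using av_nonzero_values by blast
  with assms have "m = j + 1" by (simp add: pball_def Q_powr_le_iff)
  thus ?thesis using m by simp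
qed

lemma image_inverse_uniformizer_power: "(\<lambda>y. inverse \<pi> ^ k * y) ` int_ring av = pball (int k)"
proof -
  have "av (inverse \<pi> ^ k) = Q powr real_of_int (int k)"
    using Q_pos by (simp add: av_power av_inverse av_uniformizer powr_realpow)
  thus ?thesis using uniformizer_nonzero by (simp add: image_mult_int_ring pball_def)
qed

lemma residue_representatives:
  obtains R where "finite R" "card R = q" "R \<subseteq> int_ring av"
    "\<And>r r'. r \<in> R \<Longrightarrow> r' \<in> R \<Longrightarrow> av (r - r') < 1 \<Longrightarrow> r = r'"
    "\<And>x. x \<in> int_ring av \<Longrightarrow> \<exists>r\<in>R. av (x - r) < 1"
proof -
  obtain R where R: "R \<subseteq> int_ring av"
    and bij: "bij_betw (\<lambda>a. residue_rel `` {a}) R (int_ring av // residue_rel)"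
    by (rule equiv_class_representatives[OF equiv_residue_rel]) blast
  have "finite R" "card R = q"
    using bij finite_residue_field card_residue_field
    by (simp_all add: residue_field_eq bij_betw_finite bij_betw_same_card)
  moreover note R
  moreover have "r = r'" if r: "r \<in> R" "r' \<in> R" and "av (r - r') < 1" for r r'
  proof -
    have "(r, r') \<in> residue_rel" using that R by (auto simp: residue_rel_def)
    hence "residue_rel `` {r} = residue_rel `` {r'}" by (rule equiv_class_eq[OF equiv_residue_rel])
    thus ?thesis by (rule inj_onD[OF bij_betw_imp_inj_on[OF bij] _ r])
  qed
  moreover have "\<exists>r\<in>R. av (x - r) < 1" if "x \<in> int_ring av" for x
  proof -
    have "residue_rel `` {x} \<in> (\<lambda>a. residue_rel `` {a}) ` R"
      using bij_betw_imp_surj_on[OF bij] quotientI[OF that] by simp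
    then obtain r where r: "r \<in> R" "residue_rel `` {x} = residue_rel `` {r}" by (rule imageE)
    hence "(x, r) \<in> residue_rel" using R by (intro eq_equiv_class[OF _ equiv_residue_rel]) auto
    thus ?thesis using r(1) by (auto simp: residue_rel_def)
  qed
  ultimately show thesis by (rule that)
qed

text \<open>With |c| = q^(j+1) and R a set of residue representatives, substituting y = c x
  reduces the partition to that of the integers into residue classes.\<close>
lemma pball_succ_partition:
  obtains R c where "finite R" "card R = q"
    "pball (j + 1) = (\<Union>r\<in>R. {y. av (y - c * r) \<le> Q powr j})"
    "disjoint_family_on (\<lambda>r. {y. av (y - c * r) \<le> Q powr j}) R"
proof -
  obtain R where R: "finite R" "card R = q" "R \<subseteq> int_ring av"
    "\<And>r r'. r \<in> R \<Longrightarrow> r' \<in> R \<Longrightarrow> av (r - r') < 1 \<Longrightarrow> r = r'"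
    "\<And>x. x \<in> int_ring av \<Longrightarrow> \<exists>r\<in>R. av (x - r) < 1"
    by (rule residue_representatives) blast
  obtain c where c: "c \<noteq> 0" "av c = Q powr (j + 1)" using ex_av_eq by blast
  have "Q powr j = av c * (1 / Q)" using c(2) Q_pos by (simp add: powr_add)
  hence "av (c * z) \<le> Q powr j \<longleftrightarrow> av z < 1" for z
    using av_pos[OF c(1)] by (simp only: av_mult mult_le_cancel_left_pos av_less_1_iff)
  moreover have "y - c * r = c * (y / c - r)" for y r using c(1) by (simp add: field_simps)
  ultimately have ball: "{y. av (y - c * r) \<le> Q powr j} = {y. av (y / c - r) < 1}" for r
    by simp
  have "pball (j + 1) = {y. y / c \<in> int_ring av}"
    using c av_pos[OF c(1)] by (simp add: pball_def int_ring_def av_divide)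
  also have "\<dots> = (\<Union>r\<in>R. {y. av (y / c - r) < 1})"
  proof (intro equalityI subsetI)
    fix y assume "y \<in> (\<Union>r\<in>R. {y. av (y / c - r) < 1})"
    then obtain r where "r \<in> R" "av (y / c - r) < 1" by blast
    moreover have "av (y / c) \<le> max (av (y / c - r)) (av r)"
      using av_add_le_max[of "y / c - r" r] by simp
    ultimately show "y \<in> {y. y / c \<in> int_ring av}" using R(3) by (auto simp: int_ring_def)
  qed (use R(5) in auto)
  moreover have "disjoint_family_on (\<lambda>r. {y. av (y / c - r) < 1}) R"
  proof (unfold disjoint_family_on_def, intro ballI impI equalityI subsetI)
    fix r r' y assume "r \<in> R" "r' \<in> R" "r \<noteq> r'"
      and y: "y \<in> {y. av (y / c - r) < 1} \<inter> {y. av (y / c - r') < 1}"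
    have "av (r' - r) \<le> max (av (y / c - r)) (av (r' - y / c))"
      using av_add_le_max[of "y / c - r" "r' - y / c"] by simp
    hence "av (r' - r) < 1" using y av_minus_commute[of r' "y / c"] by auto
    thus "y \<in> {}" using R(4)[of r' r] \<open>r \<in> R\<close> \<open>r' \<in> R\<close> \<open>r \<noteq> r'\<close>
      by auto
  qed simp
  ultimately have "pball (j + 1) = (\<Union>r\<in>R. {y. av (y - c * r) \<le> Q powr j})"
    and "disjoint_family_on (\<lambda>r. {y. av (y - c * r) \<le> Q powr j}) R"
    by (simp_all only: ball)
  thus thesis by (rule that[OF R(1,2)])
qed

lemma pball_finite_cover:
  obtains R where "finite R" "pball (int k) = (\<Union>r\<in>R. {y. av (y - r) \<le> 1})"
proof (induction k arbitrary: thesis)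
  case 0
  have "pball (int 0) = (\<Union>r\<in>{0}. {y. av (y - r) \<le> 1})"
    using Q_pos by (simp add: pball_def)
  thus ?case using 0 by blast
next
  case (Suc k)
  obtain R where R: "finite R" "pball (int k) = (\<Union>r\<in>R. {y. av (y - r) \<le> 1})"
    using Suc.IH by blast
  obtain S c where S: "finite S" "card S = q"
    "pball (int k + 1) = (\<Union>s\<in>S. {y. av (y - c * s) \<le> Q powr (int k)})"
    "disjoint_family_on (\<lambda>s. {y. av (y - c * s) \<le> Q powr (int k)}) S"
    by (rule pball_succ_partition) blast
  have "pball (int (Suc k)) = (\<Union>s\<in>S. {y. y - c * s \<in> pball (int k)})"
    using S(3) by (simp add: pball_def add.commute)
  also have "\<dots> = (\<Union>s\<in>S. \<Union>r\<in>R. {y. av (y - (c * s + r)) \<le> 1})"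
    using R(2) by (auto simp: diff_diff_eq)
  also have "\<dots> = (\<Union>r\<in>(\<lambda>(s, r). c * s + r) ` (S \<times> R). {y. av (y - r) \<le> 1})"
    by auto
  finally show ?case by (rule Suc.prems[rotated]) (use R(1) S(1) in simp)
qed

end

section \<open>Haar measure and the additive character\<close>

locale local_field_haar = local_field +
  fixes mu :: "'a measure"
  assumes add_haar: "add_haar av mu"
begin

lemma space_mu [simp]: "space mu = UNIV"
  and sets_mu: "sets mu = sigma_sets UNIV (av_balls av)"
  and emeasure_translate: "A \<in> sets mu \<Longrightarrow> emeasure mu ((\<lambda>y. x + y) ` A) = emeasure mu A"
  and emeasure_int_ring: "emeasure mu (int_ring av) = 1"
  using add_haar by (simp_all add: add_haar_def)

lemma ball_in_sets [measurable]: "{y. av (y - x) \<le> r} \<in> sets mu"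
proof -
  have "{y. av (y - x) \<le> r} \<in> av_balls av" unfolding av_balls_def by blast
  thus ?thesis by (simp add: sets_mu sigma_sets.Basic)
qed

lemma pball_in_sets [measurable]: "pball j \<in> sets mu"
  using ball_in_sets[of 0] by (simp add: pball_def)

lemma emeasure_ball: "emeasure mu {y. av (y - x) \<le> r} = emeasure mu {y. av y \<le> r}"
proof -
  have "{y. av (y - x) \<le> r} = (\<lambda>y. x + y) ` {y. av y \<le> r}"
    by (auto simp: image_iff algebra_simps intro!: exI[of _ "_ - x"])
  thus ?thesis using emeasure_translate ball_in_sets[of 0 r] by simp
qed

lemma emeasure_pball_succ: "emeasure mu (pball (j + 1)) = of_nat q * emeasure mu (pball j)"
proof -
  obtain R c where R: "finite R" "card R = q"
    "pball (j + 1) = (\<Union>r\<in>R. {y. av (y - c * r) \<le> Q powr j})"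
    "disjoint_family_on (\<lambda>r. {y. av (y - c * r) \<le> Q powr j}) R"
    by (rule pball_succ_partition) blast
  have "emeasure mu (pball (j + 1)) = (\<Sum>r\<in>R. emeasure mu {y. av (y - c * r) \<le> Q powr j})"
    unfolding R(3) by (rule sum_emeasure[symmetric]) (use R in auto)
  also have "\<dots> = of_nat q * emeasure mu (pball j)"
    using R(2) by (simp add: emeasure_ball pball_def)
  finally show ?thesis .
qed

lemma emeasure_pball: "emeasure mu (pball j) = ennreal (Q powr j)"
proof (induction j rule: int_induct[where k = 0])
  case base
  show ?case using emeasure_int_ring pball_0 Q_pos by simp
next
  case (step1 i)
  have "emeasure mu (pball (i + 1)) = ennreal (Q * Q powr i)"
    using emeasure_pball_succ[of i] step1 by (simp add: ennreal_mult ennreal_of_nat_eq_real_of_nat)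
  also have "Q * Q powr i = Q powr (i + 1)" using Q_pos by (simp add: powr_add)
  finally show ?case .
next
  case (step2 i)
  have "of_nat q * emeasure mu (pball (i - 1)) = ennreal (Q powr i)"
    using emeasure_pball_succ[of "i - 1"] step2 by simp
  also have "\<dots> = ennreal (Q * Q powr (i - 1))" using Q_pos by (simp add: powr_diff)
  also have "\<dots> = of_nat q * ennreal (Q powr (i - 1))"
    by (simp add: ennreal_mult ennreal_of_nat_eq_real_of_nat)
  finally show ?case using q_ge_2 by (simp add: ennreal_mult_cancel_left)
qed

lemma measure_pball: "measure mu (pball j) = Q powr j"
  using emeasure_pball[of j] by (simp add: measure_def)

lemma translate_measurable [measurable]: "(\<lambda>x. x0 + x) \<in> measurable mu mu"
proof (rule measurable_sigma_sets[OF sets_mu])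
  fix a assume "a \<in> av_balls av"
  then obtain z r where a: "a = {y. av (y - z) \<le> r}" by (auto simp: av_balls_def)
  have "(\<lambda>x. x0 + x) -` a \<inter> space mu = {y. av (y - (z - x0)) \<le> r}"
    by (auto simp: a algebra_simps)
  thus "(\<lambda>x. x0 + x) -` a \<inter> space mu \<in> sets mu" by simp
qed auto

lemma distr_translate: "distr mu mu (\<lambda>x. x0 + x) = mu"
proof (rule measure_eqI)
  fix A assume "A \<in> sets (distr mu mu (\<lambda>x. x0 + x))"
  hence A: "A \<in> sets mu" by simp
  have "(\<lambda>x. x0 + x) -` A \<inter> space mu = (\<lambda>y. - x0 + y) ` A"
    by (auto simp: image_iff intro!: bexI[of _ "x0 + _"])
  thus "emeasure (distr mu mu (\<lambda>x. x0 + x)) A = emeasure mu A"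
    using A emeasure_translate[OF A, of "- x0"] by (simp add: emeasure_distr)
qed simp

lemma integral_translate:
  fixes f :: "'a \<Rightarrow> 'b::{banach, second_countable_topology}"
  assumes "f \<in> borel_measurable mu"
  shows "(\<integral>x. f (x0 + x) \<partial>mu) = integral\<^sup>L mu f"
  using integral_distr[OF translate_measurable[of x0] assms] distr_translate[of x0] by simp

lemma borel_measurable_if_unit_locally_constant:
  assumes const: "\<And>x y. av (x - y) \<le> 1 \<Longrightarrow> f x = f y"
  shows "f \<in> borel_measurable mu"
proof (rule measurableI)
  fix A :: "'b set"
  have piece: "f -` A \<inter> pball (int k) \<in> sets mu" for k
  proof -
    obtain R where R: "finite R" "pball (int k) = (\<Union>r\<in>R. {y. av (y - r) \<le> 1})"
      by (rule pball_finite_cover) blast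
    have "f -` A \<inter> pball (int k) = (\<Union>r\<in>{r\<in>R. f r \<in> A}. {y. av (y - r) \<le> 1})"
      using R(2) const by auto
    thus ?thesis using R(1) by (auto intro: sets.finite_UN)
  qed
  have "f -` A \<inter> space mu = (\<Union>k. f -` A \<inter> pball (int k))"
    using ex_pball_nat by auto
  also have "\<dots> \<in> sets mu" using piece by (intro sets.countable_UN) auto
  finally show "f -` A \<inter> space mu \<in> sets mu" .
qed simp

lemma bounded_on_pball_if_unit_locally_constant:
  fixes f :: "'a \<Rightarrow> 'b::real_normed_vector"
  assumes const: "\<And>x y. av (x - y) \<le> 1 \<Longrightarrow> f x = f y"
  obtains M where "\<And>x. x \<in> pball j \<Longrightarrow> norm (f x) \<le> M"
proof -
  obtain R where R: "finite R" "pball (int (nat j)) = (\<Union>r\<in>R. {y. av (y - r) \<le> 1})"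
    by (rule pball_finite_cover) blast
  have "norm (f x) \<le> (\<Sum>r\<in>R. norm (f r))" if "x \<in> pball j" for x
  proof -
    have "x \<in> pball (int (nat j))" using that pball_mono[of j "int (nat j)"] by auto
    then obtain r where "r \<in> R" "av (x - r) \<le> 1" using R(2) by auto
    thus ?thesis using const R(1) by (auto intro: member_le_sum)
  qed
  thus thesis by (rule that)
qed

lemma set_integrable_pball_if_unit_locally_constant:
  fixes f :: "'a \<Rightarrow> 'b::{banach, second_countable_topology}"
  assumes "\<And>x y. av (x - y) \<le> 1 \<Longrightarrow> f x = f y"
  shows "set_integrable mu (pball j) f"
proof -
  obtain M where "\<And>x. x \<in> pball j \<Longrightarrow> norm (f x) \<le> M"
    using bounded_on_pball_if_unit_locally_constant[where f = f, OF assms] by blast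
  thus ?thesis unfolding set_integrable_def
    using borel_measurable_if_unit_locally_constant[OF assms] emeasure_pball
    by (intro integrableI_bounded_set_indicator[where B = M]) auto
qed

end

locale local_field_char = local_field_haar +
  fixes eta :: "'a \<Rightarrow> complex"
  assumes eta_hom: "\<forall>x y. eta (x + y) = eta x * eta y"
    and eta_int_ring: "\<forall>x\<in>int_ring av. eta x = 1"
    and eta_nontrivial: "\<exists>x\<in>(\<lambda>y. inverse \<pi> * y) ` int_ring av. eta x \<noteq> 1"
begin

lemma eta_add: "eta (x + y) = eta x * eta y"
  using eta_hom by blast

lemma eta_eq_1: "av x \<le> 1 \<Longrightarrow> eta x = 1"
  using eta_int_ring by (simp add: int_ring_def)

lemma eta_minus_mult: "eta (- x) * eta x = 1"
  using eta_add[of "- x" x] eta_eq_1[of 0] by simp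

lemma eta_minus_unit_locally_constant: "av (x - y) \<le> 1 \<Longrightarrow> eta (- x) = eta (- y)"
  using eta_add[of "- y" "y - x"] eta_eq_1[of "y - x"] by (simp add: av_minus_commute)

lemma eta_minus_measurable [measurable]: "(\<lambda>x. eta (- x)) \<in> borel_measurable mu"
  by (rule borel_measurable_if_unit_locally_constant) (rule eta_minus_unit_locally_constant)

lemma set_integrable_eta_minus: "set_integrable mu (pball j) (\<lambda>x. eta (- x))"
  by (rule set_integrable_pball_if_unit_locally_constant) (rule eta_minus_unit_locally_constant)

definition eta_pball_integral :: "int \<Rightarrow> complex" where
  "eta_pball_integral j = (LINT x:pball j|mu. eta (- x))"

lemma eta_pball_integral_nonpos:
  assumes "j \<le> 0" shows "eta_pball_integral j = Q powr j"
proof -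
  have "eta (- x) = 1" if "x \<in> pball j" for x
  proof -
    have "av x \<le> Q powr 0" using that assms Q_powr_le_iff[of j 0] by (auto simp: pball_def)
    thus ?thesis using eta_eq_1[of "- x"] Q_pos by simp
  qed
  hence "eta_pball_integral j = (LINT x:pball j|mu. (1::complex))"
    unfolding eta_pball_integral_def by (intro set_lebesgue_integral_cong) auto
  also have "\<dots> = Q powr j"
    using emeasure_pball[of j]
    by (subst set_integral_const) (auto simp: measure_pball scaleR_conv_of_real)
  finally show ?thesis .
qed

text \<open>Translating by some x0 with |x0| \<le> q and eta x0 \<noteq> 1 preserves the ball but
  multiplies the integral by eta (- x0) \<noteq> 1.\<close>
lemma eta_pball_integral_pos:
  assumes "j \<ge> 1" shows "eta_pball_integral j = 0"
proof -
  obtain y where y: "av y \<le> 1" "eta (inverse \<pi> * y) \<noteq> 1"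
    using eta_nontrivial by (auto simp: int_ring_def)
  define x0 where "x0 = inverse \<pi> * y"
  have x0: "av x0 \<le> Q" "eta (- x0) \<noteq> 1"
    using y eta_minus_mult[of x0]
    by (auto simp: x0_def av_mult av_inverse av_uniformizer mult_left_le)
  have "Q powr real_of_int 1 \<le> Q powr real_of_int j" using assms by (simp only: Q_powr_le_iff)
  hence x0_in: "av x0 \<le> Q powr j" using x0(1) Q_pos by simp
  have shift: "x0 + x \<in> pball j \<longleftrightarrow> x \<in> pball j" for x
  proof
    assume "x0 + x \<in> pball j"
    moreover have "av x \<le> max (av (x0 + x)) (av (- x0))" using av_add_le_max[of "x0 + x" "- x0"]
      by simp
    ultimately show "x \<in> pball j" using x0_in by (auto simp: pball_def)
  next
    assume "x \<in> pball j"
    thus "x0 + x \<in> pball j" using av_add_le_max[of x0 x] x0_in by (auto simp: pball_def)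
  qed
  define f where "f x = indicator (pball j) x *\<^sub>R eta (- x)" for x
  have "f \<in> borel_measurable mu" unfolding f_def by measurable
  hence "integral\<^sup>L mu f = (\<integral>x. f (x0 + x) \<partial>mu)"
    by (rule integral_translate[symmetric])
  also have "\<dots> = (\<integral>x. eta (- x0) * f x \<partial>mu)"
    using eta_add[of "- x0" "- _"] by (simp add: f_def shift indicator_def)
  finally have "integral\<^sup>L mu f = eta (- x0) * integral\<^sup>L mu f" by simp
  hence "integral\<^sup>L mu f = 0" using x0(2) by (metis mult_cancel_right1 mult.commute)
  thus ?thesis by (simp add: eta_pball_integral_def set_lebesgue_integral_def f_def[abs_def])
qed

lemma set_integral_eta_radial_succ:
  fixes G :: "real \<Rightarrow> complex"
  assumes int: "set_integrable mu (pball K) (\<lambda>x. eta (- x) * G (av x))"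
  shows "set_integrable mu (pball (K + 1)) (\<lambda>x. eta (- x) * G (av x))"
    and "(LINT x:pball (K + 1)|mu. eta (- x) * G (av x)) =
      (LINT x:pball K|mu. eta (- x) * G (av x)) +
      G (Q powr (K + 1)) * (eta_pball_integral (K + 1) - eta_pball_integral K)"
proof -
  define S where "S = pball (K + 1) - pball K"
  have un: "pball (K + 1) = pball K \<union> S" and dj: "pball K \<inter> S = {}"
    using pball_mono[of K "K + 1"] by (auto simp: S_def)
  have shell: "G (av x) = G (Q powr (K + 1))" if "x \<in> S" for x
    using av_eq_if_in_pball_shell[of x K] that by (simp add: S_def)
  have int_S: "set_integrable mu S (\<lambda>x. eta (- x))"
    by (rule set_integrable_subset[OF set_integrable_eta_minus]) (auto simp: S_def)
  hence "set_integrable mu S (\<lambda>x. eta (- x) * G (Q powr (K + 1)))"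
    by (intro set_integrable_mult_left)
  hence int_S': "set_integrable mu S (\<lambda>x. eta (- x) * G (av x))"
    using shell by (subst set_integrable_cong[OF refl refl]) auto
  show "set_integrable mu (pball (K + 1)) (\<lambda>x. eta (- x) * G (av x))"
    unfolding un using int int_S' by (rule set_integrable_Un) (auto simp: S_def)
  have "(LINT x:S|mu. eta (- x) * G (av x)) = (LINT x:S|mu. eta (- x)) * G (Q powr (K + 1))"
    using shell
    by (subst set_lebesgue_integral_cong[where g = "\<lambda>x. eta (- x) * G (Q powr (K + 1))"])
      (auto simp: S_def)
  moreover have "eta_pball_integral (K + 1) = eta_pball_integral K + (LINT x:S|mu. eta (- x))"
    unfolding eta_pball_integral_def un
    by (rule set_integral_Un[OF dj set_integrable_eta_minus int_S])
  moreover have "(LINT x:pball (K + 1)|mu. eta (- x) * G (av x)) =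
      (LINT x:pball K|mu. eta (- x) * G (av x)) + (LINT x:S|mu. eta (- x) * G (av x))"
    unfolding un by (rule set_integral_Un[OF dj int int_S'])
  ultimately show "(LINT x:pball (K + 1)|mu. eta (- x) * G (av x)) =
      (LINT x:pball K|mu. eta (- x) * G (av x)) +
      G (Q powr (K + 1)) * (eta_pball_integral (K + 1) - eta_pball_integral K)"
    by (simp add: algebra_simps)
qed

text \<open>Summation by parts over the shells |x| = q^j.\<close>
lemma set_integral_eta_radial:
  fixes G :: "real \<Rightarrow> complex"
  assumes G: "\<And>x. x \<in> pball J \<Longrightarrow> G (av x) = c" and "J \<le> K"
  shows "set_integrable mu (pball K) (\<lambda>x. eta (- x) * G (av x))"
    and "(LINT x:pball K|mu. eta (- x) * G (av x)) =
      c * eta_pball_integral J +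
      (\<Sum>j\<in>{J<..K}. G (Q powr j) * (eta_pball_integral j - eta_pball_integral (j - 1)))"
  using \<open>J \<le> K\<close>
proof (induction K rule: int_ge_induct)
  case base
  have "set_integrable mu (pball J) (\<lambda>x. eta (- x) * c)"
    using set_integrable_eta_minus by (rule set_integrable_mult_left)
  thus "set_integrable mu (pball J) (\<lambda>x. eta (- x) * G (av x))"
    using G by (subst set_integrable_cong[OF refl refl]) auto
  have "(LINT x:pball J|mu. eta (- x) * G (av x)) = (LINT x:pball J|mu. eta (- x) * c)"
    using G by (intro set_lebesgue_integral_cong) auto
  thus "(LINT x:pball J|mu. eta (- x) * G (av x)) = c * eta_pball_integral J +
      (\<Sum>j\<in>{J<..J}. G (Q powr j) * (eta_pball_integral j - eta_pball_integral (j - 1)))"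
    by (simp add: eta_pball_integral_def mult.commute)
next
  case (step K)
  have "{J<..K + 1} = insert (K + 1) {J<..K}" using step.hyps by auto
  thus "set_integrable mu (pball (K + 1)) (\<lambda>x. eta (- x) * G (av x))"
    and "(LINT x:pball (K + 1)|mu. eta (- x) * G (av x)) = c * eta_pball_integral J +
      (\<Sum>j\<in>{J<..K + 1}. G (Q powr j) * (eta_pball_integral j - eta_pball_integral (j - 1)))"
    using set_integral_eta_radial_succ[OF step.IH(1)] step.IH(2) by (simp_all add: algebra_simps)
qed

end

section \<open>The spherical vector\<close>

lemma mat2_nth [simp]:
  "mat2 a b c d $ 1 $ 1 = a" "mat2 a b c d $ 1 $ 2 = b"
  "mat2 a b c d $ 2 $ 1 = c" "mat2 a b c d $ 2 $ 2 = d"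
  by (simp_all add: mat2_def)

lemma mat2_collapse: "(M :: 'a::zero^2^2) = mat2 (M$1$1) (M$1$2) (M$2$1) (M$2$2)"
  by (simp add: vec_eq_iff forall_2)

lemma mat2_mult:
  fixes a b c d e f g h :: "'a::comm_ring_1"
  shows "mat2 a b c d ** mat2 e f g h = mat2 (a*e + b*g) (a*f + b*h) (c*e + d*g) (c*f + d*h)"
  by (simp add: vec_eq_iff forall_2 matrix_matrix_mult_def sum_2)

lemma det_mat2: "det (mat2 a b c d :: 'a::comm_ring_1^2^2) = a * d - b * c"
  by (simp add: det_2)

lemma of_real_inverse_powr:
  assumes "r > 0"
  shows "complex_of_real (inverse r) powr z = complex_of_real r powr (- z)"
  using assms by (simp add: powr_def Ln_of_real ln_inverse del: of_real_inverse)

context local_field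
begin

text \<open>Iwasawa decomposition: a matrix with bottom row (c, d) is a(1/d) n(b d) k or
  a(1/c) n(a c) k with k integral, according as |c| \<le> |d| or not.\<close>
lemma spherical_vector_eq:
  fixes f0 :: "'a^2^2 \<Rightarrow> complex" and \<nu> :: complex
  assumes f0: "\<forall>t x k. t \<noteq> 0 \<longrightarrow> k \<in> SL2_int av \<longrightarrow>
               f0 (amat t ** nmat x ** k) = complex_of_real (av t) powr (\<nu> + 1)"
    and det: "det g = 1"
  shows "f0 g = complex_of_real (max (av (g$2$1)) (av (g$2$2))) powr (- (\<nu> + 1))"
proof -
  define a b c d where "a = g$1$1" "b = g$1$2" "c = g$2$1" "d = g$2$2"
  have g: "g = mat2 a b c d" unfolding a_b_c_d_def by (rule mat2_collapse)
  have det: "a * d - b * c = 1" using det g by (simp add: det_mat2)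
  have f0_inverse: "f0 g = complex_of_real (av e) powr (- (\<nu> + 1))"
    if "e \<noteq> 0" "k \<in> SL2_int av" "amat (1 / e) ** nmat x ** k = g" for e x k
  proof -
    have "f0 g = complex_of_real (inverse (av e)) powr (\<nu> + 1)"
      using f0 that by (metis av_divide av_1 divide_eq_0_iff inverse_eq_divide one_neq_zero)
    thus ?thesis using of_real_inverse_powr[OF av_pos[OF that(1)]] by simp
  qed
  show ?thesis
  proof (cases "av c \<le> av d")
    case True
    have d0: "d \<noteq> 0" using True det av_nonneg[of c] by (cases "c = 0") auto
    have "(1 + b * c) / d = a" using d0 det by (simp add: field_simps)
    hence "amat (1 / d) ** nmat (b * d) ** mat2 1 0 (c / d) 1 = g"
      using d0 det by (simp add: g amat_def nmat_def mat2_mult field_simps)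
    moreover have "mat2 1 0 (c / d) 1 \<in> SL2_int av"
      using True d0 by (auto simp: SL2_int_def det_mat2 int_ring_def forall_2 av_divide av_pos)
    ultimately show ?thesis using f0_inverse d0 True by (simp add: a_b_c_d_def max_def)
  next
    case False
    have c0: "c \<noteq> 0" using False av_nonneg[of d] by auto
    have "amat (1 / c) ** nmat (a * c) ** mat2 0 (-1) 1 (d / c) = g"
      using c0 det by (simp add: g amat_def nmat_def mat2_mult field_simps)
    moreover have "mat2 0 (-1) 1 (d / c) \<in> SL2_int av"
      using False c0 by (auto simp: SL2_int_def det_mat2 int_ring_def forall_2 av_divide av_pos)
    ultimately show ?thesis using f0_inverse c0 False by (simp add: a_b_c_d_def max_def)
  qed
qed

end

section \<open>The coefficient series\<close>

text \<open>For V = q^nu and Qc = q, the term (q^-s / V)^n whittaker_coeff V Qc n is the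
  contribution of the shell |t| = q^-n to the zeta integral.\<close>
definition whittaker_coeff :: "complex \<Rightarrow> complex \<Rightarrow> nat \<Rightarrow> complex" where
  "whittaker_coeff V Qc n = V ^ (2 * n) + (1 - 1 / Qc) * (\<Sum>i<2 * n. V ^ i) - 1 / (Qc * V)"

lemma whittaker_coeff_Suc:
  "whittaker_coeff V Qc (Suc n) =
     whittaker_coeff V Qc n + V ^ (2 * n) * (V\<^sup>2 - 1 + (1 - 1 / Qc) * (1 + V))"
  by (simp add: whittaker_coeff_def algebra_simps power2_eq_square power_add add_divide_distrib)

lemma norm_whittaker_coeff_le:
  "norm (whittaker_coeff V Qc n) \<le>
     (1 + norm (1 - 1 / Qc) + norm (1 / (Qc * V))) * (4 * (1 + norm V)\<^sup>2) ^ n"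
proof -
  define R where "R = 4 * (1 + norm V)\<^sup>2"
  have "1 \<le> (1 + norm V)\<^sup>2" by (simp add: one_le_power)
  have R1: "(1 + norm V) ^ (2 * n) \<le> R ^ n"
    unfolding R_def power_mult by (rule power_mono) simp_all
  have R2: "1 \<le> R ^ n"
    unfolding R_def
    by (rule one_le_power) (use \<open>1 \<le> (1 + norm V)\<^sup>2\<close> in linarith)
  have "norm (V ^ (2 * n)) \<le> (1 + norm V) ^ (2 * n)"
    unfolding norm_power by (intro power_mono) auto
  hence "norm (V ^ (2 * n)) \<le> R ^ n" using R1 by linarith
  moreover have "norm (\<Sum>i<2 * n. V ^ i) \<le> R ^ n"
  proof -
    have "norm (\<Sum>i<2 * n. V ^ i) \<le> (\<Sum>i<2 * n. (1 + norm V) ^ (2 * n))"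
    proof (rule order_trans[OF norm_sum sum_mono])
      fix i assume "i \<in> {..<2 * n}"
      have "norm (V ^ i) \<le> (1 + norm V) ^ i" unfolding norm_power by (intro power_mono) auto
      also have "\<dots> \<le> (1 + norm V) ^ (2 * n)" using \<open>i \<in> _\<close>
        by (intro power_increasing) auto
      finally show "norm (V ^ i) \<le> (1 + norm V) ^ (2 * n)" .
    qed
    also have "\<dots> = real (2 * n) * (1 + norm V) ^ (2 * n)" by simp
    also have "\<dots> \<le> 4 ^ n * (1 + norm V) ^ (2 * n)"
    proof (rule mult_right_mono)
      have "2 * n < 4 ^ n" using less_exp[of "2 * n"] by (simp add: power_mult)
      thus "real (2 * n) \<le> 4 ^ n"
        by (metis less_imp_le of_nat_le_iff of_nat_numeral of_nat_power)
    qed simp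
    finally show ?thesis by (simp add: R_def power_mult power_mult_distrib)
  qed
  ultimately have "norm (whittaker_coeff V Qc n) \<le>
      R ^ n + norm (1 - 1 / Qc) * R ^ n + norm (1 / (Qc * V)) * R ^ n"
    unfolding whittaker_coeff_def using R2
    by (intro order_trans[OF norm_triangle_ineq4] add_mono order_trans[OF norm_triangle_ineq])
      (auto simp: norm_mult mult_le_cancel_left1 intro: mult_left_mono)
  thus ?thesis by (simp add: R_def algebra_simps)
qed

lemma summable_norm_whittaker_coeff_series:
  assumes "norm (z / V) * (4 * (1 + norm V)\<^sup>2) < 1"
  shows "summable (\<lambda>n. norm ((z / V) ^ n * whittaker_coeff V Qc n))"
proof (rule summable_comparison_test)
  define C where "C = 1 + norm (1 - 1 / Qc) + norm (1 / (Qc * V))"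
  define r where "r = norm (z / V) * (4 * (1 + norm V)\<^sup>2)"
  have "norm ((z / V) ^ n * whittaker_coeff V Qc n) \<le> C * r ^ n" for n
  proof -
    have "norm ((z / V) ^ n * whittaker_coeff V Qc n) =
        norm (z / V) ^ n * norm (whittaker_coeff V Qc n)"
      by (simp add: norm_mult norm_power)
    also have "\<dots> \<le> norm (z / V) ^ n * (C * (4 * (1 + norm V)\<^sup>2) ^ n)"
      unfolding C_def by (intro mult_left_mono norm_whittaker_coeff_le) simp
    finally show ?thesis by (simp add: r_def power_mult_distrib mult_ac)
  qed
  thus "\<exists>N. \<forall>n\<ge>N. norm (norm ((z / V) ^ n * whittaker_coeff V Qc n)) \<le> C * r ^ n"
    by simp
  show "summable (\<lambda>n. C * r ^ n)" using assms by (simp add: r_def summable_geometric)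
qed

lemma whittaker_coeff_series_eq:
  assumes S: "(\<lambda>n. (z / V) ^ n * whittaker_coeff V Qc n) sums S"
    and V: "V \<noteq> 0" and small: "norm (z * V) < 1"
  shows "S - whittaker_coeff V Qc 0 =
    (z / V) * S + (z / V) * (V\<^sup>2 - 1 + (1 - 1 / Qc) * (1 + V)) / (1 - z * V)"
proof -
  define y where "y = z / V"
  define H where "H = whittaker_coeff V Qc"
  define D where "D = V\<^sup>2 - 1 + (1 - 1 / Qc) * (1 + V)"
  have "(\<lambda>n. y ^ Suc n * H (Suc n)) = (\<lambda>n. y * (y ^ n * H n) + y * D * (z * V) ^ n)"
  proof
    fix n
    have "y ^ n * V ^ (2 * n) = (z * V) ^ n"
      using V by (simp add: y_def power_mult power_mult_distrib power2_eq_square field_simps)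
    thus "y ^ Suc n * H (Suc n) = y * (y ^ n * H n) + y * D * (z * V) ^ n"
      by (simp add: H_def D_def whittaker_coeff_Suc algebra_simps)
  qed
  moreover have "(\<lambda>n. y ^ Suc n * H (Suc n)) sums (S - H 0)"
    using S by (subst sums_Suc_iff) (simp add: y_def H_def)
  moreover have "(\<lambda>n. y * (y ^ n * H n) + y * D * (z * V) ^ n) sums (y * S + y * D / (1 - z * V))"
    using sums_add[OF sums_mult[OF S] sums_mult[OF geometric_sums[OF small]]]
    by (simp add: y_def H_def divide_inverse)
  ultimately have "S - H 0 = y * S + y * D / (1 - z * V)" by (simp add: sums_unique2)
  thus ?thesis by (simp add: y_def H_def D_def)
qed

lemma whittaker_coeff_series_sums:
  fixes V z Qc :: complex
  assumes V: "V \<noteq> 0" and Qc: "Qc \<noteq> 0"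
    and small: "norm (z / V) * (4 * (1 + norm V)\<^sup>2) < 1" and small': "norm (z * V) < 1"
  shows "(\<lambda>n. (z / V) ^ n * whittaker_coeff V Qc n) sums
    ((1 - 1 / (Qc * V)) * (1 + z) / ((1 - z / V) * (1 - z * V)))"
proof -
  obtain S where S: "(\<lambda>n. (z / V) ^ n * whittaker_coeff V Qc n) sums S"
    using summable_norm_cancel[OF summable_norm_whittaker_coeff_series[OF small]]
    by (auto simp: summable_sums)
  have "norm (z / V) < 1"
    using small by (smt (verit, best) mult_le_cancel_left1 norm_ge_zero one_le_power
        power2_eq_square zero_le_mult_iff)
  hence "1 - z * V \<noteq> 0" "1 - z / V \<noteq> 0" using small' by auto
  have "S * (1 - z / V) = whittaker_coeff V Qc 0 +
      (z / V) * (V\<^sup>2 - 1 + (1 - 1 / Qc) * (1 + V)) / (1 - z * V)"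
    using whittaker_coeff_series_eq[OF S V small'] by (simp add: algebra_simps)
  hence "S * ((1 - z / V) * (1 - z * V)) = (whittaker_coeff V Qc 0 +
      (z / V) * (V\<^sup>2 - 1 + (1 - 1 / Qc) * (1 + V)) / (1 - z * V)) * (1 - z * V)"
    by (simp add: mult.assoc)
  also have "\<dots> = (1 - 1 / (Qc * V)) * (1 + z)"
    using V Qc \<open>1 - z * V \<noteq> 0\<close>
    by (simp add: whittaker_coeff_def field_simps) (simp add: algebra_simps power2_eq_square)
  finally have "S = (1 - 1 / (Qc * V)) * (1 + z) / ((1 - z / V) * (1 - z * V))"
    using \<open>1 - z * V \<noteq> 0\<close> \<open>1 - z / V \<noteq> 0\<close>
    by (simp add: eq_divide_eq)
  thus ?thesis using S by simp
qed

section \<open>The Whittaker function on the diagonal\<close>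

lemmas exp_collect = exp_diff[symmetric] exp_add[symmetric] exp_of_nat_mult[symmetric]

locale whittaker = local_field_char +
  fixes f0 :: "'a^2^2 \<Rightarrow> complex" and \<nu> :: complex
  assumes f0: "\<forall>t x k. t \<noteq> 0 \<longrightarrow> k \<in> SL2_int av \<longrightarrow>
               f0 (amat t ** nmat x ** k) = complex_of_real (av t) powr (\<nu> + 1)"
begin

definition radial_value :: "real \<Rightarrow> real \<Rightarrow> complex" where
  "radial_value a v = complex_of_real (max a (v / a)) powr (- (\<nu> + 1))"

lemma f0_wmat_nmat_amat:
  assumes "t \<noteq> 0" shows "f0 (wmat ** nmat x ** amat t) = radial_value (av t) (av x)"
proof -
  have "wmat ** nmat x ** amat t = mat2 0 (1 / t) (- t) (- x / t)"
    using assms by (simp add: wmat_def nmat_def amat_def mat2_mult field_simps)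
  moreover have "det (mat2 0 (1 / t) (- t) (- x / t)) = 1" using assms by (simp add: det_mat2)
  ultimately show ?thesis
    using spherical_vector_eq[OF f0] by (simp add: radial_value_def av_divide)
qed

lemma whittaker_W_amat_eq_lim:
  assumes "t \<noteq> 0"
  shows "whittaker_W av \<pi> mu eta f0 (amat t) =
    lim (\<lambda>k. LINT x:pball (int k)|mu. eta (- x) * radial_value (av t) (av x))"
  unfolding whittaker_W_def whittaker_psi_def image_inverse_uniformizer_power
  using f0_wmat_nmat_amat[OF assms] by simp

definition whittaker_shell_value :: "int \<Rightarrow> complex" where
  "whittaker_shell_value m =
     radial_value (Q powr m) (Q powr (2 * m)) * Q powr (2 * m)
     + (\<Sum>j::int\<in>{2 * m<..0}. radial_value (Q powr m) (Q powr j) * (Q powr j - Q powr (j - 1)))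
     - radial_value (Q powr m) (Q powr 1)"

lemma radial_value_on_pball:
  assumes "x \<in> pball (2 * m)"
  shows "radial_value (Q powr m) (av x) = radial_value (Q powr m) (Q powr (2 * m))"
proof -
  have Q2m: "Q powr (2 * m) = Q powr m * Q powr m" by (simp add: powr_add[symmetric])
  hence "av x / Q powr m \<le> Q powr m" using assms by (simp add: pball_def divide_le_eq)
  thus ?thesis using Q2m by (simp add: radial_value_def max_def)
qed

text \<open>The shells with |x| > q do not contribute, so the integrals over the balls stabilise.\<close>
lemma pball_integral_radial_value:
  assumes k: "max (2 * m) 1 \<le> int k"
  shows "(LINT x:pball (int k)|mu. eta (- x) * radial_value (Q powr m) (av x)) =
    (if m > 0 then 0 else whittaker_shell_value m)"
proof -
  define J where "J = 2 * m"
  define E where "E = eta_pball_integral"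
  have val: "(LINT x:pball (int k)|mu. eta (- x) * radial_value (Q powr m) (av x)) =
     radial_value (Q powr m) (Q powr J) * E J +
     (\<Sum>j\<in>{J<..int k}. radial_value (Q powr m) (Q powr j) * (E j - E (j - 1)))"
    using set_integral_eta_radial(2)[where G = "radial_value (Q powr m)", OF radial_value_on_pball] k
    unfolding E_def by (simp add: J_def)
  show ?thesis
  proof (cases "m > 0")
    case True
    have "(\<Sum>j\<in>{J<..int k}. radial_value (Q powr m) (Q powr j) * (E j - E (j - 1))) = 0"
      using True by (intro sum.neutral) (auto simp: J_def E_def eta_pball_integral_pos)
    thus ?thesis using val True by (simp add: J_def E_def eta_pball_integral_pos)
  next
    case False
    have "{J<..int k} = {J<..0} \<union> {0<..int k}" using False k by (auto simp: J_def)
    hence "(\<Sum>j\<in>{J<..int k}. radial_value (Q powr m) (Q powr j) * (E j - E (j - 1))) =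
        (\<Sum>j\<in>{J<..0}. radial_value (Q powr m) (Q powr j) * (E j - E (j - 1))) +
        (\<Sum>j\<in>{0<..int k}. radial_value (Q powr m) (Q powr j) * (E j - E (j - 1)))"
      by (simp add: sum.union_disjoint)
    also have "(\<Sum>j\<in>{0<..int k}. radial_value (Q powr m) (Q powr j) * (E j - E (j - 1))) =
        (\<Sum>j\<in>{1}. radial_value (Q powr m) (Q powr j) * (E j - E (j - 1)))"
      using k by (intro sum.mono_neutral_right) (auto simp: E_def eta_pball_integral_pos)
    also have "(\<Sum>j\<in>{J<..0}. radial_value (Q powr m) (Q powr j) * (E j - E (j - 1))) =
        (\<Sum>j\<in>{J<..0}. radial_value (Q powr m) (Q powr j) * (Q powr j - Q powr (j - 1)))"
      by (intro sum.cong) (auto simp: E_def eta_pball_integral_nonpos)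
    finally show ?thesis using val False Q_pos
      by (simp add: whittaker_shell_value_def J_def E_def eta_pball_integral_nonpos
          eta_pball_integral_pos mult.commute)
  qed
qed

lemma whittaker_W_amat:
  assumes t: "t \<noteq> 0" and m: "av t = Q powr m"
  shows "whittaker_W av \<pi> mu eta f0 (amat t) = (if m > 0 then 0 else whittaker_shell_value m)"
proof -
  have "(\<lambda>k. LINT x:pball (int k)|mu. eta (- x) * radial_value (av t) (av x)) \<longlonglongrightarrow>
      (if m > 0 then 0 else whittaker_shell_value m)"
    unfolding m eventually_sequentially
    by (rule tendsto_eventually, rule eventually_sequentiallyI[of "nat (max (2 * m) 1)"])
      (simp add: pball_integral_radial_value)
  thus ?thesis using whittaker_W_amat_eq_lim[OF t] by (simp add: limI)
qed

definition q_nu :: complex where "q_nu = of_nat q powr \<nu>"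

lemma q_nu_eq_exp: "q_nu = exp (\<nu> * of_real (ln Q))"
  by (simp add: q_nu_def of_nat_q_powr)

lemma q_powr_div_q_nu_eq_exp: "of_nat q powr (- s) / q_nu = exp (- (s + \<nu>) * of_real (ln Q))"
  unfolding q_nu_eq_exp of_nat_q_powr exp_collect
  by (rule arg_cong[where f = exp]) (simp add: algebra_simps)

lemma whittaker_coeff_q_nu_eq_exp:
  "whittaker_coeff q_nu (of_nat q) n = q_nu ^ (2 * n) +
     (1 - exp (- of_real (ln Q))) * (\<Sum>i<2 * n. q_nu ^ i) - exp (- (\<nu> + 1) * of_real (ln Q))"
proof -
  have q: "(of_nat q :: complex) = exp (of_real (ln Q))" using of_nat_q_powr[of 1] by simp
  have "- (\<nu> + 1) * of_real (ln Q) = - of_real (ln Q) - \<nu> * of_real (ln Q)"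
    by (simp add: algebra_simps)
  hence "1 / (of_nat q * q_nu) = exp (- (\<nu> + 1) * of_real (ln Q))"
    by (simp add: q q_nu_eq_exp exp_minus exp_diff divide_inverse)
  moreover have "1 / (of_nat q :: complex) = exp (- of_real (ln Q))"
    by (simp add: q exp_minus divide_inverse)
  ultimately show ?thesis by (simp add: whittaker_coeff_def)
qed

lemma radial_value_Q_powr:
  fixes j m :: int
  assumes "j \<ge> 2 * m"
  shows "radial_value (Q powr m) (Q powr j) = exp (- (\<nu> + 1) * of_real ((j - m) * ln Q))"
proof -
  have "Q powr m \<le> Q powr j / Q powr m"
    using assms by (simp add: Q_powr_le_iff flip: powr_diff)
  moreover have "Q powr j / Q powr m = Q powr (j - m)" by (simp add: powr_diff)
  ultimately show ?thesis by (simp add: radial_value_def max_def of_real_Q_powr_powr)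
qed

lemma whittaker_shell_sum_times_powr:
  assumes m: "m = - int n"
  shows "(\<Sum>j::int\<in>{2 * m<..0}. radial_value (Q powr m) (Q powr j) * (Q powr j - Q powr (j - 1)))
     * complex_of_real (Q powr m) powr (s - 1) =
   (of_nat q powr (- s) / q_nu) ^ n * ((1 - exp (- of_real (ln Q))) * (\<Sum>i<2 * n. q_nu ^ i))"
proof -
  define M where "M = complex_of_real (Q powr m) powr (s - 1)"
  have M: "M = exp ((s - 1) * of_real (m * ln Q))" by (simp add: M_def of_real_Q_powr_powr)
  have reindex: "{2 * m<..0} = (\<lambda>i. - int i) ` {..<2 * n}"
    by (auto simp: m image_iff intro!: bexI[of _ "nat (- _)"])
  have "inj_on (\<lambda>i. - int i) {..<2 * n}" by (auto simp: inj_on_def)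
  have "radial_value (Q powr m) (Q powr (- int i)) * (Q powr (- int i) - Q powr (- int i - 1)) * M =
      (1 - exp (- of_real (ln Q))) * ((of_nat q powr (- s) / q_nu) ^ n * q_nu ^ i)"
    if "i < 2 * n" for i
  proof -
    have "- int i \<ge> 2 * m" using that by (simp add: m)
    hence radial: "radial_value (Q powr m) (Q powr (- int i)) =
        exp (- (\<nu> + 1) * of_real ((- int i - m) * ln Q))" by (rule radial_value_Q_powr)
    have diff: "complex_of_real (Q powr (- int i) - Q powr (- int i - 1)) =
        exp (of_real (- real i * ln Q)) * (1 - exp (- of_real (ln Q)))"
      unfolding of_real_diff of_real_Q_powr
      by (simp add: algebra_simps exp_diff exp_minus divide_inverse)
    have "exp (- (\<nu> + 1) * of_real ((- int i - m) * ln Q)) * exp (of_real (- real i * ln Q)) * M =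
        (of_nat q powr (- s) / q_nu) ^ n * q_nu ^ i"
      unfolding M q_powr_div_q_nu_eq_exp unfolding q_nu_eq_exp m exp_collect
      by (rule arg_cong[where f = exp]) (simp add: algebra_simps)
    thus ?thesis unfolding radial diff by (simp add: algebra_simps)
  qed
  hence "(\<Sum>i<2 * n. radial_value (Q powr m) (Q powr (- int i)) *
      (Q powr (- int i) - Q powr (- int i - 1)) * M) =
      (\<Sum>i<2 * n. (1 - exp (- of_real (ln Q))) * ((of_nat q powr (- s) / q_nu) ^ n * q_nu ^ i))"
    by (intro sum.cong) auto
  hence "(\<Sum>j\<in>{2 * m<..0}. radial_value (Q powr m) (Q powr j) * (Q powr j - Q powr (j - 1))) * M =
      (of_nat q powr (- s) / q_nu) ^ n * ((1 - exp (- of_real (ln Q))) * (\<Sum>i<2 * n. q_nu ^ i))"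
    unfolding reindex sum.reindex[OF \<open>inj_on _ _\<close>] sum_distrib_right
    by (simp add: sum_distrib_left algebra_simps)
  thus ?thesis by (simp add: M_def)
qed

lemma whittaker_shell_value_times_powr:
  "whittaker_shell_value (- int n) * complex_of_real (Q powr (- int n)) powr (s - 1) =
     (of_nat q powr (- s) / q_nu) ^ n * whittaker_coeff q_nu (of_nat q) n"
proof -
  define m where "m = - int n"
  define y where "y = of_nat q powr (- s) / q_nu"
  define M where "M = complex_of_real (Q powr m) powr (s - 1)"
  have M: "M = exp ((s - 1) * of_real (m * ln Q))" by (simp add: M_def of_real_Q_powr_powr)
  have "radial_value (Q powr m) (Q powr (2 * m)) * Q powr (2 * m) * M = y ^ n * q_nu ^ (2 * n)"
    unfolding radial_value_Q_powr[OF order_refl] M of_real_Q_powr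
    unfolding y_def q_powr_div_q_nu_eq_exp unfolding q_nu_eq_exp m_def exp_collect
    by (rule arg_cong[where f = exp]) (simp add: algebra_simps)
  moreover have "radial_value (Q powr m) (Q powr 1) * M = y ^ n * exp (- (\<nu> + 1) * of_real (ln Q))"
  proof -
    have "radial_value (Q powr m) (Q powr 1) = exp (- (\<nu> + 1) * of_real ((1 - m) * ln Q))"
      using radial_value_Q_powr[of m 1] by (simp add: m_def)
    hence "radial_value (Q powr m) (Q powr 1) * M =
        exp (- (\<nu> + 1) * of_real ((1 - m) * ln Q)) * exp ((s - 1) * of_real (m * ln Q))"
      by (simp add: M)
    also have "\<dots> = y ^ n * exp (- (\<nu> + 1) * of_real (ln Q))"
      unfolding y_def q_powr_div_q_nu_eq_exp m_def exp_collect
      by (rule arg_cong[where f = exp]) (simp add: algebra_simps)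
    finally show ?thesis .
  qed
  ultimately show ?thesis
    using whittaker_shell_sum_times_powr[OF m_def, of s]
    unfolding whittaker_coeff_q_nu_eq_exp whittaker_shell_value_def
    unfolding m_def[symmetric] M_def[symmetric] y_def[symmetric]
    by (simp add: algebra_simps)
qed

end

section \<open>The zeta integral\<close>

lemma L_Ad_div_L_triv_mult_F_nu:
  assumes "1 - of_nat q powr (- s) \<noteq> (0::complex)"
  shows "L_Ad q \<nu> s / L_triv q s * F_nu q \<nu> s =
    (1 - of_nat q powr (- \<nu> - 1)) * (1 + of_nat q powr (- s)) /
    ((1 - of_nat q powr (- (s + \<nu>))) * (1 - of_nat q powr (- (s - \<nu>))))"
proof -
  define a b z where "a = (of_nat q :: complex) powr (- (s + \<nu>))"
    and "b = (of_nat q :: complex) powr (- (s - \<nu>))" and "z = (of_nat q :: complex) powr (- s)"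
  have "1 / ((1 - a) * (1 - z) * (1 - b)) / (1 / (1 - z)) = 1 / ((1 - a) * (1 - b))"
    using assms by (simp add: z_def divide_divide_eq_right mult.commute mult.left_commute)
  thus ?thesis by (simp add: L_Ad_def L_triv_def F_nu_def a_def b_def z_def)
qed

lemma integrable_suminf_indicator:
  fixes c :: "nat \<Rightarrow> 'b::{banach, second_countable_topology}"
  assumes sets: "\<And>i. A i \<in> sets M" and unit: "\<And>i. emeasure M (A i) = 1"
    and summable: "summable (\<lambda>i. norm (c i))"
  shows "integrable M (\<lambda>t. \<Sum>i. indicator (A i) t *\<^sub>R c i)"
    and "(\<integral>t. (\<Sum>i. indicator (A i) t *\<^sub>R c i) \<partial>M) = (\<Sum>i. c i)"
proof -
  define f where "f i t = indicator (A i) t *\<^sub>R c i" for i t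
  have finite: "emeasure M (A i) < \<infinity>" and measure: "measure M (A i) = 1" for i
    using unit by (simp_all add: measure_def)
  have int: "integrable M (f i)" for i
    unfolding f_def using sets finite by (intro integrable_scaleR_left) auto
  have norm_f: "norm (f i t) = indicator (A i) t * norm (c i)" for i t
    by (simp add: f_def indicator_def)
  have "AE t in M. summable (\<lambda>i. norm (f i t))"
    by (intro AE_I2 summable_comparison_test[OF _ summable]) (auto simp: norm_f indicator_def)
  moreover have "summable (\<lambda>i. \<integral>t. norm (f i t) \<partial>M)"
    using sets finite summable by (simp add: norm_f measure)
  moreover have "integral\<^sup>L M (f i) = c i" for i
    unfolding f_def using sets finite by (simp add: measure)
  ultimately show "integrable M (\<lambda>t. \<Sum>i. indicator (A i) t *\<^sub>R c i)"
    and "(\<integral>t. (\<Sum>i. indicator (A i) t *\<^sub>R c i) \<partial>M) = (\<Sum>i. c i)"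
    using integrable_suminf[OF int] integral_suminf[OF int] by (simp_all add: f_def)
qed

locale zeta_integral = whittaker +
  fixes mux :: "'a measure"
  assumes mult_haar: "mult_haar av mu mux"
begin

lemma space_mux: "space mux = {x. x \<noteq> 0}"
  and sets_mux: "sets mux = sets (restrict_space mu {x. x \<noteq> 0})"
  and emeasure_mult: "A \<in> sets mux \<Longrightarrow> x \<noteq> 0 \<Longrightarrow> emeasure mux ((\<lambda>y. x * y) ` A) = emeasure mux A"
  and emeasure_unit_group: "emeasure mux (unit_group av) = 1"
  using mult_haar by (simp_all add: mult_haar_def)

definition av_shell :: "int \<Rightarrow> 'a set" where
  "av_shell m = {t. av t = Q powr m}"

lemma av_shell_eq_pball_diff: "av_shell m = pball m - pball (m - 1)"
proof (intro equalityI subsetI)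
  fix x assume "x \<in> av_shell m"
  moreover have "Q powr real_of_int (m - 1) < Q powr real_of_int m" by (subst Q_powr_less_iff) simp
  ultimately show "x \<in> pball m - pball (m - 1)" by (auto simp: av_shell_def pball_def)
next
  fix x assume "x \<in> pball m - pball (m - 1)"
  thus "x \<in> av_shell m" using av_eq_if_in_pball_shell[of x "m - 1"] by (simp add: av_shell_def)
qed

lemma av_shell_in_sets: "av_shell m \<in> sets mux"
proof -
  have "av x \<le> 0 \<longleftrightarrow> x = 0" for x
    by (cases "x = 0") (simp_all add: not_le av_pos)
  hence "{x. x \<noteq> 0} \<inter> space mu = space mu - {y. av (y - 0) \<le> 0}" by auto
  hence "{x. x \<noteq> 0} \<inter> space mu \<in> sets mu" using ball_in_sets[of 0 0]
    by (metis sets.compl_sets)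
  moreover have "av_shell m \<subseteq> {x. x \<noteq> 0}" using Q_pos by (auto simp: av_shell_def)
  moreover have "av_shell m \<in> sets mu" unfolding av_shell_eq_pball_diff by simp
  ultimately show ?thesis unfolding sets_mux using sets_restrict_space_iff by blast
qed

lemma emeasure_av_shell: "emeasure mux (av_shell m) = 1"
proof -
  obtain c where c: "c \<noteq> 0" "av c = Q powr m" using ex_av_eq by blast
  have "av_shell m = (\<lambda>y. c * y) ` av_shell 0"
  proof (intro equalityI subsetI)
    fix x assume "x \<in> av_shell m"
    thus "x \<in> (\<lambda>y. c * y) ` av_shell 0"
      using c Q_pos by (intro image_eqI[of _ _ "x / c"]) (auto simp: av_shell_def av_divide)
  qed (use c Q_pos in \<open>auto simp: av_shell_def av_mult\<close>)
  moreover have "av_shell 0 = unit_group av" using Q_pos by (simp add: av_shell_def unit_group_def)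
  ultimately show ?thesis
    using emeasure_mult[OF av_shell_in_sets c(1), of 0] emeasure_unit_group by simp
qed

definition zeta_coeff :: "complex \<Rightarrow> nat \<Rightarrow> complex" where
  "zeta_coeff s n = (of_nat q powr (- s) / q_nu) ^ n * whittaker_coeff q_nu (of_nat q) n"

lemma zeta_integrand_eq_suminf:
  assumes t: "t \<noteq> 0"
  shows "whittaker_W av \<pi> mu eta f0 (amat t) * complex_of_real (av t) powr (s - 1) =
    (\<Sum>i. indicator (av_shell (- int i)) t *\<^sub>R zeta_coeff s i)"
proof -
  obtain m :: int where m: "av t = Q powr m" using av_nonzero_values[OF t] by blast
  have ind: "indicator (av_shell (- int i)) t = (if - int i = m then 1 else (0::real))" for i
    using m Q_powr_eq_iff by (auto simp: av_shell_def indicator_def)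
  show ?thesis
  proof (cases "m > 0")
    case True
    thus ?thesis using whittaker_W_amat[OF t m] by (auto simp: ind)
  next
    case False
    define n where "n = nat (- m)"
    have mn: "m = - int n" using False by (simp add: n_def)
    have "(\<lambda>i. indicator (av_shell (- int i)) t *\<^sub>R zeta_coeff s i) =
        (\<lambda>i. if i = n then zeta_coeff s i else 0)"
      by (auto simp: ind mn)
    thus ?thesis
      using whittaker_W_amat[OF t m] whittaker_shell_value_times_powr[of n s]
        sums_unique[OF sums_single[of n "zeta_coeff s"]]
      by (simp add: m mn zeta_coeff_def)
  qed
qed

lemma zeta_convergence_bounds:
  assumes s: "3 * \<bar>Re \<nu>\<bar> + 4 < Re s"
  defines "z \<equiv> (of_nat q :: complex) powr (- s)"
  shows "norm (z / q_nu) * (4 * (1 + norm q_nu)\<^sup>2) < 1" "norm (z * q_nu) < 1" "norm z < 1"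
proof -
  define a where "a = \<bar>Re \<nu>\<bar>"
  have nV: "norm q_nu = Q powr Re \<nu>" and nz: "norm z = Q powr (- Re s)"
    by (simp_all add: q_nu_def z_def norm_of_nat_q_powr)
  have "Q powr Re \<nu> \<le> Q powr a" "Q powr 0 \<le> Q powr a"
    by (simp_all only: Q_powr_le_iff) (simp_all add: a_def)
  hence "1 + norm q_nu \<le> 2 * Q powr a" using nV Q_pos by simp
  hence "(1 + norm q_nu)\<^sup>2 \<le> (2 * Q powr a)\<^sup>2" by (rule power_mono) simp
  also have "\<dots> = 4 * Q powr (2 * a)" by (simp add: power2_eq_square powr_add[symmetric])
  finally have "(1 + norm q_nu)\<^sup>2 \<le> 4 * Q powr (2 * a)" .
  moreover have "norm (z / q_nu) = Q powr (- Re s - Re \<nu>)"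
    using nV nz by (simp add: norm_divide powr_diff)
  ultimately have "norm (z / q_nu) * (4 * (1 + norm q_nu)\<^sup>2) \<le>
      Q powr (- Re s - Re \<nu>) * (16 * Q powr (2 * a))"
    by (simp add: mult_left_mono)
  also have "\<dots> = 16 * Q powr (2 * a - Re \<nu> - Re s)"
    by (simp add: powr_add[symmetric] algebra_simps)
  also have "\<dots> < 16 * Q powr (- 4)"
    using s by (simp add: Q_powr_less_iff a_def)
  also have "Q powr (- 4) \<le> 1 / 16"
  proof -
    have "(2::real) ^ 4 \<le> Q ^ 4" using q_ge_2 by (intro power_mono) auto
    thus ?thesis using Q_pos by (simp add: powr_minus_divide powr_numeral)
  qed
  finally show "norm (z / q_nu) * (4 * (1 + norm q_nu)\<^sup>2) < 1" by simp
  show "norm (z * q_nu) < 1"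
    using s by (simp add: norm_mult nV nz Q_powr_less_1_iff flip: powr_add)
  show "norm z < 1" using s by (simp add: nz Q_powr_less_1_iff)
qed

lemma zeta_coeff_sums:
  assumes "3 * \<bar>Re \<nu>\<bar> + 4 < Re s"
  defines "z \<equiv> (of_nat q :: complex) powr (- s)"
  shows "summable (\<lambda>n. norm (zeta_coeff s n))"
    and "zeta_coeff s sums ((1 - 1 / (of_nat q * q_nu)) * (1 + z) / ((1 - z / q_nu) * (1 - z * q_nu)))"
proof -
  note bounds = zeta_convergence_bounds[OF assms(1), folded z_def]
  have "q_nu \<noteq> 0" "(of_nat q :: complex) \<noteq> 0" using Q_pos by (simp_all add: q_nu_def)
  show "summable (\<lambda>n. norm (zeta_coeff s n))"
    using summable_norm_whittaker_coeff_series[OF bounds(1)] by (simp add: zeta_coeff_def z_def)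
  show "zeta_coeff s sums ((1 - 1 / (of_nat q * q_nu)) * (1 + z) / ((1 - z / q_nu) * (1 - z * q_nu)))"
    using whittaker_coeff_series_sums[OF \<open>q_nu \<noteq> 0\<close> \<open>of_nat q \<noteq> 0\<close> bounds(1,2)]
    by (simp add: zeta_coeff_def[abs_def] z_def)
qed

lemma zeta_I_eq:
  assumes s: "3 * \<bar>Re \<nu>\<bar> + 4 < Re s"
  shows "integrable mux (\<lambda>t. whittaker_W av \<pi> mu eta f0 (amat t) * complex_of_real (av t) powr (s - 1))"
    and "zeta_I av \<pi> mu mux eta f0 s = L_Ad q \<nu> s / L_triv q s * F_nu q \<nu> s"
proof -
  define z where "z = (of_nat q :: complex) powr (- s)"
  have integrand: "whittaker_W av \<pi> mu eta f0 (amat t) * complex_of_real (av t) powr (s - 1) =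
      (\<Sum>i. indicator (av_shell (- int i)) t *\<^sub>R zeta_coeff s i)" if "t \<in> space mux" for t
    using zeta_integrand_eq_suminf that by (simp add: space_mux)
  note series = integrable_suminf_indicator[OF av_shell_in_sets emeasure_av_shell zeta_coeff_sums(1)[OF s]]
  show "integrable mux (\<lambda>t. whittaker_W av \<pi> mu eta f0 (amat t) * complex_of_real (av t) powr (s - 1))"
    using series(1) by (simp add: Bochner_Integration.integrable_cong[OF refl integrand])
  have "zeta_I av \<pi> mu mux eta f0 s = (\<Sum>i. zeta_coeff s i)"
    unfolding zeta_I_def using series(2)
    by (simp add: Bochner_Integration.integral_cong[OF refl integrand])
  also have "\<dots> = (1 - 1 / (of_nat q * q_nu)) * (1 + z) / ((1 - z / q_nu) * (1 - z * q_nu))"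
    using zeta_coeff_sums(2)[OF s] by (simp add: z_def sums_iff)
  also have "\<dots> = L_Ad q \<nu> s / L_triv q s * F_nu q \<nu> s"
  proof -
    have e1: "(of_nat q :: complex) powr (- (s + \<nu>)) = z / q_nu"
      and e2: "(of_nat q :: complex) powr (- (s - \<nu>)) = z * q_nu"
      and e3: "(of_nat q :: complex) powr (- \<nu> - 1) = 1 / (of_nat q * q_nu)"
      using Q_pos by (simp_all add: z_def q_nu_def powr_diff powr_add powr_minus_divide
          flip: powr_add)
    have "1 - (of_nat q :: complex) powr (- s) \<noteq> 0"
      using zeta_convergence_bounds(3)[OF s] by auto
    thus ?thesis using L_Ad_div_L_triv_mult_F_nu[of q s \<nu>] unfolding e1 e2 e3 z_def by simp
  qed
  finally show "zeta_I av \<pi> mu mux eta f0 s = L_Ad q \<nu> s / L_triv q s * F_nu q \<nu> s" .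
qed

end

theorem proposition5p1:
  fixes av :: "'a::field \<Rightarrow> real" and \<pi> :: 'a and q :: nat
    and mu mux :: "'a measure" and eta :: "'a \<Rightarrow> complex"
    and f0 :: "'a^2^2 \<Rightarrow> complex" and \<nu> :: complex
  assumes F: "nonarch_local_field av \<pi> q"
    and dx: "add_haar av mu"
    and dtx: "mult_haar av mu mux"
    and eta_hom: "\<forall>x y. eta (x + y) = eta x * eta y"
    and eta_O: "\<forall>x\<in>int_ring av. eta x = 1"
    and eta_nontriv: "\<exists>x\<in>(\<lambda>y. inverse \<pi> * y) ` int_ring av. eta x \<noteq> 1"
    and f0: "\<forall>t x k. t \<noteq> 0 \<longrightarrow> k \<in> SL2_int av \<longrightarrow>
               f0 (amat t ** nmat x ** k) = complex_of_real (av t) powr (\<nu> + 1)"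
  shows "\<exists>\<sigma>::real. \<forall>s. \<sigma> < Re s \<longrightarrow>
           integrable mux (\<lambda>t. whittaker_W av \<pi> mu eta f0 (amat t) * complex_of_real (av t) powr (s - 1))
         \<and> zeta_I av \<pi> mu mux eta f0 s = L_Ad q \<nu> s / L_triv q s * F_nu q \<nu> s"
proof -
  interpret zeta_integral av \<pi> q mu eta f0 \<nu> mux
    by unfold_locales (use assms in auto)
  show ?thesis using zeta_I_eq by blast
qed

end
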